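(* Let $(X,o,\mu)$ be a boundedly-compact pmm space. (i) The curve $t\mapsto\overline B_t(o)$, $t\ge0$, is càdlàg with respect to the Hausdorff metric on closed subsets of $X$, and its left limit at $t=r>0$ is the closure of $B_r(o)$. (ii) The curve $t\mapsto\mu|_{\overline B_t(o)}$ is càdlàg with respect to the Prokhorov metric, and its left limit at $t=r>0$ is $\mu|_{B_r(o)}$.
   Context: A pmm space is $(X,o,\mu)$ with $X$ a metric space, $o\in X$, $\mu$ a nonnegative Borel measure; it is boundedly compact if every closed ball $\overline B_r(x)=\{y:d(x,y)\le r\}$ is compact and has finite $\mu$-measure. Open ball $B_r(x)=\{y:d(x,y)<r\}$. Hausdorff distance: $d_H(A,B)=\inf\{\epsilon\ge0:A\subseteq B^\epsilon,B\subseteq A^\epsilon\}$, $A^\epsilon=\{z:\exists a\in A, d(z,a)\le\epsilon\}$. Prokhorov distance: $d_P(\mu,\nu)=\inf\{\epsilon>0:\mu(A)\le\nu(A^\epsilon)+\epsilon,\ \nu(A)\le\mu(A^\epsilon)+\epsilon\ \forall A\text{ closed}\}$. *)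

theory Defs
  imports "HOL-Analysis.Analysis"
begin

text \<open>A pmm space (X, o, mu): X is the carrier type (a metric space), o a point,
  mu a (nonnegative) Borel measure on X.  Boundedly compact: every closed ball is
  compact and has finite measure.\<close>
definition boundedly_compact_pmm :: "'a::metric_space \<Rightarrow> 'a measure \<Rightarrow> bool" where
  "boundedly_compact_pmm x0 M \<longleftrightarrow>
     sets M = sets borel \<and>
     (\<forall>x r. compact (cball x r) \<and> emeasure M (cball x r) < \<infinity>)"

definition thick :: "'a::metric_space set \<Rightarrow> real \<Rightarrow> 'a set" where
  "thick A e = {z. \<exists>a\<in>A. dist z a \<le> e}"

definition hausdorff_dist :: "'a::metric_space set \<Rightarrow> 'a set \<Rightarrow> real" where
  "hausdorff_dist A B = Inf {e. e \<ge> 0 \<and> A \<subseteq> thick B e \<and> B \<subseteq> thick A e}"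

definition prokhorov_dist :: "'a::metric_space measure \<Rightarrow> 'a measure \<Rightarrow> real" where
  "prokhorov_dist M N = Inf {e. e > 0 \<and> (\<forall>A. closed A \<longrightarrow>
        emeasure M A \<le> emeasure N (thick A e) + ennreal e \<and>
        emeasure N A \<le> emeasure M (thick A e) + ennreal e)}"

definition restrict_meas :: "'a measure \<Rightarrow> 'a set \<Rightarrow> 'a measure" where
  "restrict_meas M S = density M (indicator S)"

end

theory Submission
  imports Defs
begin

text \<open>
  Everything rests on compactness of closed balls. Right-continuity of t \<mapsto> cball o t:
  on the compact set cball o (t + 1) minus the open e-neighbourhood of cball o t the distance
  to o attains a minimum m > t, so cball o s lies in that neighbourhood for s < m. Left limit
  at r: closure (ball o r) is compact, hence covered by finitely many e-balls centred in
  ball o r, and these finitely many centres lie in a single cball o s0 with s0 < r.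
  For the measures, the restrictions of mu to nested sets S \<subseteq> T are e-close in the
  Prokhorov sense as soon as mu (T - S) \<le> e, and both mu (cball o s - cball o t) and
  mu (ball o r - cball o s) tend to 0 by continuity from above of the locally finite mu.
  Compactness of closed balls is also what makes closed e-thickenings of closed sets closed,
  hence Borel.
\<close>

lemma compact_continuous_gt_uniform:
  fixes f :: "'a::topological_space \<Rightarrow> real"
  assumes "compact K" "continuous_on K f" "\<forall>y\<in>K. c < f y"
  shows "\<exists>m>c. \<forall>y\<in>K. m \<le> f y"
proof (cases "K = {}")
  case True
  then show ?thesis by (intro exI[of _ "c + 1"]) auto
next
  case False
  then obtain y0 where "y0 \<in> K" "\<forall>y\<in>K. f y0 \<le> f y"
    using continuous_attains_inf[OF assms(1) False assms(2)] by blast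
  with assms(3) show ?thesis by blast
qed

lemma subset_thick: "0 \<le> e \<Longrightarrow> A \<subseteq> thick A e"
  unfolding thick_def by force

lemma notin_thick_dist_gap:
  fixes A :: "'a::metric_space set"
  assumes proper: "\<And>x::'a. \<And>r. compact (cball x r)" and "closed A" and "z \<notin> thick A e"
  shows "\<exists>d>e. \<forall>a\<in>A. d \<le> dist z a"
proof -
  have "\<forall>a\<in>A \<inter> cball z (e + 1). e < dist z a"
    using assms(3) by (auto simp: thick_def dist_commute)
  moreover have "continuous_on (A \<inter> cball z (e + 1)) (dist z)"
    by (intro continuous_intros)
  ultimately obtain m where "e < m" and m: "\<forall>a\<in>A \<inter> cball z (e + 1). m \<le> dist z a"
    using compact_continuous_gt_uniform[OF closed_Int_compact[OF \<open>closed A\<close> proper]] by blast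
  have "min m (e + 1) \<le> dist z a" if "a \<in> A" for a
    using m[rule_format, of a] that by (cases "dist z a \<le> e + 1") auto
  moreover have "e < min m (e + 1)"
    using \<open>e < m\<close> by simp
  ultimately show ?thesis
    by blast
qed

lemma closed_thick:
  fixes A :: "'a::metric_space set"
  assumes proper: "\<And>x::'a. \<And>r. compact (cball x r)" and "closed A"
  shows "closed (thick A e)"
  unfolding closed_def open_contains_ball
proof
  fix z assume "z \<in> - thick A e"
  then obtain d where "e < d" and d: "\<forall>a\<in>A. d \<le> dist z a"
    using notin_thick_dist_gap[OF proper \<open>closed A\<close>] by blast
  have "y \<notin> thick A e" if "y \<in> ball z (d - e)" for y
  proof
    assume "y \<in> thick A e"
    then obtain a where "a \<in> A" "dist y a \<le> e"
      by (auto simp: thick_def)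
    with that dist_triangle[of z a y] have "dist z a < d"
      by simp
    with d \<open>a \<in> A\<close> show False
      by auto
  qed
  then show "\<exists>d>0. ball z d \<subseteq> - thick A e"
    using \<open>e < d\<close> by (intro exI[of _ "d - e"]) auto
qed

lemma tendsto_zeroI_bounds:
  fixes f :: "'a \<Rightarrow> real"
  assumes "\<And>e. 0 < e \<Longrightarrow> eventually (\<lambda>s. f s \<in> {0..e}) F"
  shows "(f \<longlongrightarrow> 0) F"
proof (rule tendstoI)
  fix e :: real assume "0 < e"
  with assms[of "e / 2"] show "eventually (\<lambda>s. dist (f s) 0 < e) F"
    by (auto elim: eventually_mono)
qed

section \<open>Hausdorff distance\<close>

lemma hausdorff_dist_le:
  assumes "0 \<le> e" "A \<subseteq> thick B e" "B \<subseteq> thick A e"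
  shows "hausdorff_dist A B \<in> {0..e}"
proof -
  let ?E = "{e. e \<ge> 0 \<and> A \<subseteq> thick B e \<and> B \<subseteq> thick A e}"
  have "e \<in> ?E" "bdd_below ?E"
    using assms by (auto intro: bdd_belowI[of _ 0])
  then show ?thesis
    unfolding hausdorff_dist_def by (auto intro: cInf_greatest cInf_lower)
qed

lemma tendsto_hausdorff_dist_zero:
  assumes "\<And>e. 0 < e \<Longrightarrow> eventually (\<lambda>s. A s \<subseteq> thick (B s) e \<and> B s \<subseteq> thick (A s) e) F"
  shows "((\<lambda>s. hausdorff_dist (A s) (B s)) \<longlongrightarrow> 0) F"
proof (rule tendsto_zeroI_bounds)
  fix e :: real assume "0 < e"
  from assms[OF this] show "eventually (\<lambda>s. hausdorff_dist (A s) (B s) \<in> {0..e}) F"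
    by (rule eventually_mono) (use \<open>0 < e\<close> in \<open>blast intro: hausdorff_dist_le less_imp_le\<close>)
qed

lemma Union_balls_subset_thick: "(\<Union>a\<in>A. ball a e) \<subseteq> thick A e"
  using less_imp_le unfolding thick_def by (fastforce simp: dist_commute)

lemma eventually_cball_subset_open:
  fixes x :: "'a::metric_space"
  assumes "compact (cball x r)" "t < r" "open U" "cball x t \<subseteq> U"
  shows "eventually (\<lambda>s. cball x s \<subseteq> U) (at_right t)"
proof -
  let ?K = "cball x r - U"
  have "\<forall>y\<in>?K. t < dist x y"
  proof
    fix y assume "y \<in> ?K"
    then have "y \<notin> cball x t"
      using assms(4) by blast
    then show "t < dist x y"
      by simp
  qed
  moreover have "compact ?K"
    using assms by (simp add: Diff_eq compact_Int_closed closed_Compl)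
  moreover have "continuous_on ?K (dist x)"
    by (intro continuous_intros)
  ultimately obtain m where "t < m" and m: "\<forall>y\<in>?K. m \<le> dist x y"
    using compact_continuous_gt_uniform by blast
  have "cball x s \<subseteq> U" if "s < min m r" for s
    using m that by force
  then show ?thesis
    unfolding eventually_at_right_field using \<open>t < m\<close> \<open>t < r\<close> by (intro exI[of _ "min m r"]) auto
qed

lemma tendsto_hausdorff_dist_cball_at_right:
  fixes x :: "'a::metric_space"
  assumes "\<And>r. compact (cball x r)"
  shows "((\<lambda>s. hausdorff_dist (cball x s) (cball x t)) \<longlongrightarrow> 0) (at_right t)"
proof (rule tendsto_hausdorff_dist_zero)
  fix e :: real assume "0 < e"
  have "eventually (\<lambda>s. cball x s \<subseteq> (\<Union>a\<in>cball x t. ball a e)) (at_right t)"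
    using \<open>0 < e\<close> by (intro eventually_cball_subset_open[OF assms, of t "t + 1"]) auto
  moreover have "eventually (\<lambda>s. t < s) (at_right t)"
    by (rule eventually_at_right_less)
  ultimately show "eventually (\<lambda>s. cball x s \<subseteq> thick (cball x t) e \<and> cball x t \<subseteq> thick (cball x s) e) (at_right t)"
  proof eventually_elim
    case (elim s)
    have "cball x s \<subseteq> thick (cball x t) e"
      using elim(1) Union_balls_subset_thick by (rule order_trans)
    moreover have "cball x t \<subseteq> thick (cball x s) e"
      using elim(2) \<open>0 < e\<close> by (intro order_trans[OF subset_cball subset_thick]) auto
    ultimately show ?case ..
  qed
qed

lemma finite_subset_ball_imp_cball:
  fixes x :: "'a::metric_space"
  assumes "finite D" "D \<subseteq> ball x r"
  shows "\<exists>s0<r. D \<subseteq> cball x s0"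
proof -
  define s0 where "s0 = Max (insert (r - 1) (dist x ` D))"
  have "s0 < r"
    using assms unfolding s0_def by (subst Max_less_iff) auto
  moreover have "D \<subseteq> cball x s0"
    using assms unfolding s0_def by auto
  ultimately show ?thesis
    by blast
qed

lemma eventually_subset_thick_cball_at_left:
  fixes x :: "'a::metric_space"
  assumes "compact K" "K \<subseteq> closure (ball x r)" "0 < e"
  shows "eventually (\<lambda>s. K \<subseteq> thick (cball x s) e) (at_left r)"
proof -
  have "K \<subseteq> (\<Union>z\<in>ball x r. ball z e)"
    using assms(2,3) by (force simp: closure_approachable)
  then obtain D where D: "D \<subseteq> ball x r" "finite D" "K \<subseteq> (\<Union>z\<in>D. ball z e)"
    using compactE_image[OF assms(1), of "ball x r" "\<lambda>z. ball z e"] by blast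
  then obtain s0 where "s0 < r" "D \<subseteq> cball x s0"
    using finite_subset_ball_imp_cball by blast
  have "K \<subseteq> thick (cball x s) e" if "s0 < s" for s
  proof -
    have "D \<subseteq> cball x s"
      using \<open>D \<subseteq> cball x s0\<close> that by (meson less_imp_le order_trans subset_cball)
    then have "K \<subseteq> (\<Union>z\<in>cball x s. ball z e)"
      using D(3) by blast
    then show ?thesis
      using Union_balls_subset_thick by (rule order_trans)
  qed
  then show ?thesis
    unfolding eventually_at_left_field using \<open>s0 < r\<close> by blast
qed

lemma tendsto_hausdorff_dist_cball_at_left:
  fixes x :: "'a::metric_space"
  assumes "\<And>r. compact (cball x r)"
  shows "((\<lambda>s. hausdorff_dist (cball x s) (closure (ball x r))) \<longlongrightarrow> 0) (at_left r)"
proof (rule tendsto_hausdorff_dist_zero)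
  fix e :: real assume "0 < e"
  have "closure (ball x r) \<subseteq> cball x r"
    by (intro closure_minimal ball_subset_cball closed_cball)
  then have "compact (closure (ball x r))"
    using assms by (metis closed_closure compact_Int_closed inf.absorb_iff2)
  then have "eventually (\<lambda>s. closure (ball x r) \<subseteq> thick (cball x s) e) (at_left r)"
    using \<open>0 < e\<close> by (intro eventually_subset_thick_cball_at_left) auto
  moreover have "eventually (\<lambda>s. s < r) (at_left r)"
    by (simp add: eventually_at_filter)
  ultimately show "eventually (\<lambda>s. cball x s \<subseteq> thick (closure (ball x r)) e
      \<and> closure (ball x r) \<subseteq> thick (cball x s) e) (at_left r)"
  proof eventually_elim
    case (elim s)
    have "cball x s \<subseteq> ball x r"
      using elim(2) by auto
    also have "\<dots> \<subseteq> closure (ball x r)"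
      by (rule closure_subset)
    also have "\<dots> \<subseteq> thick (closure (ball x r)) e"
      using \<open>0 < e\<close> by (intro subset_thick) simp
    finally show ?case
      using elim(1) by blast
  qed
qed

section \<open>Prokhorov distance\<close>

definition prokhorov_close :: "'a::metric_space measure \<Rightarrow> 'a measure \<Rightarrow> real \<Rightarrow> bool" where
  "prokhorov_close M N e \<longleftrightarrow> (\<forall>A. closed A \<longrightarrow>
      emeasure M A \<le> emeasure N (thick A e) + ennreal e \<and>
      emeasure N A \<le> emeasure M (thick A e) + ennreal e)"

lemma prokhorov_close_commute: "prokhorov_close M N e \<longleftrightarrow> prokhorov_close N M e"
  unfolding prokhorov_close_def by blast

lemma prokhorov_dist_le:
  assumes "0 < e" "prokhorov_close M N e"
  shows "prokhorov_dist M N \<in> {0..e}"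
proof -
  let ?E = "{e. e > 0 \<and> prokhorov_close M N e}"
  have "e \<in> ?E" "bdd_below ?E"
    using assms by (auto intro: bdd_belowI[of _ 0])
  then have "Inf ?E \<le> e" "0 \<le> Inf ?E"
    by (auto intro: cInf_lower cInf_greatest)
  then have "Inf ?E \<in> {0..e}"
    by simp
  then show ?thesis
    by (simp add: prokhorov_dist_def prokhorov_close_def)
qed

lemma tendsto_prokhorov_dist_zero:
  assumes "\<And>e. 0 < e \<Longrightarrow> eventually (\<lambda>s. prokhorov_close (M s) (N s) e) F"
  shows "((\<lambda>s. prokhorov_dist (M s) (N s)) \<longlongrightarrow> 0) F"
proof (rule tendsto_zeroI_bounds)
  fix e :: real assume "0 < e"
  from assms[OF this] show "eventually (\<lambda>s. prokhorov_dist (M s) (N s) \<in> {0..e}) F"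
    by (rule eventually_mono) (rule prokhorov_dist_le[OF \<open>0 < e\<close>])
qed

lemma emeasure_restrict_meas:
  "S \<in> sets M \<Longrightarrow> A \<in> sets M \<Longrightarrow> emeasure (restrict_meas M S) A = emeasure M (S \<inter> A)"
  unfolding restrict_meas_def by (rule emeasure_restricted)

lemma prokhorov_close_restrict_meas:
  fixes M :: "'a::metric_space measure"
  assumes borel: "sets M = sets borel" and thick_closed: "\<And>A::'a set. closed A \<Longrightarrow> closed (thick A e)"
    and S: "S \<in> sets M" and T: "T \<in> sets M" and "S \<subseteq> T"
    and small: "emeasure M (T - S) \<le> ennreal e" and "0 \<le> e"
  shows "prokhorov_close (restrict_meas M T) (restrict_meas M S) e"
  unfolding prokhorov_close_def
proof (intro allI impI conjI)
  fix A :: "'a set" assume "closed A"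
  moreover have "closed (thick A e)"
    using \<open>closed A\<close> by (rule thick_closed)
  ultimately have A: "A \<in> sets M" and TA: "thick A e \<in> sets M"
    by (simp_all add: borel)
  have "A \<subseteq> thick A e"
    using \<open>0 \<le> e\<close> by (rule subset_thick)
  have "emeasure (restrict_meas M T) A = emeasure M (T \<inter> A)"
    using T A by (rule emeasure_restrict_meas)
  also have "\<dots> \<le> emeasure M ((S \<inter> thick A e) \<union> (T - S))"
    using \<open>A \<subseteq> thick A e\<close> S T TA by (intro emeasure_mono) auto
  also have "\<dots> \<le> emeasure M (S \<inter> thick A e) + emeasure M (T - S)"
    using S T TA by (intro emeasure_subadditive) auto
  also have "\<dots> \<le> emeasure (restrict_meas M S) (thick A e) + ennreal e"
    using S TA small by (simp add: emeasure_restrict_meas add_left_mono)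
  finally show "emeasure (restrict_meas M T) A \<le> emeasure (restrict_meas M S) (thick A e) + ennreal e" .
  have "emeasure (restrict_meas M S) A = emeasure M (S \<inter> A)"
    using S A by (rule emeasure_restrict_meas)
  also have "\<dots> \<le> emeasure M (T \<inter> thick A e)"
    using \<open>A \<subseteq> thick A e\<close> \<open>S \<subseteq> T\<close> T TA by (intro emeasure_mono) auto
  also have "\<dots> \<le> emeasure (restrict_meas M T) (thick A e) + ennreal e"
    using T TA by (simp add: emeasure_restrict_meas)
  finally show "emeasure (restrict_meas M S) A \<le> emeasure (restrict_meas M T) (thick A e) + ennreal e" .
qed

lemma ex_emeasure_less_at_right:
  fixes B :: "real \<Rightarrow> 'a set"
  assumes meas: "\<And>s. t < s \<Longrightarrow> B s \<in> sets M"
    and mono: "\<And>s s'. t < s \<Longrightarrow> s \<le> s' \<Longrightarrow> B s \<subseteq> B s'"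
    and fin: "\<And>s. t < s \<Longrightarrow> emeasure M (B s) \<noteq> \<infinity>"
    and empty: "\<And>y. \<exists>s>t. y \<notin> B s"
    and "0 < a"
  shows "\<exists>s>t. emeasure M (B s) < a"
proof -
  define b where "b n = t + inverse (real (Suc n))" for n
  have b: "t < b n" for n
    by (simp add: b_def)
  have "(\<lambda>n. emeasure M (B (b n))) \<longlonglongrightarrow> emeasure M (\<Inter>n. B (b n))"
  proof (rule Lim_emeasure_decseq)
    show "range (\<lambda>n. B (b n)) \<subseteq> sets M" "emeasure M (B (b n)) \<noteq> \<infinity>" for n
      using b meas fin by auto
    have "b (Suc n) \<le> b n" for n
      unfolding b_def by (simp add: le_imp_inverse_le)
    then show "decseq (\<lambda>n. B (b n))"
      by (intro decseq_SucI mono b)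
  qed
  moreover have "(\<Inter>n. B (b n)) = {}"
  proof (rule equals0I)
    fix y assume y: "y \<in> (\<Inter>n. B (b n))"
    obtain s where "t < s" "y \<notin> B s"
      using empty by blast
    moreover obtain n where "inverse (real (Suc n)) < s - t"
      using reals_Archimedean[of "s - t"] \<open>t < s\<close> by auto
    then have "B (b n) \<subseteq> B s"
      using b[of n] by (intro mono) (auto simp: b_def)
    ultimately show False
      using y by blast
  qed
  ultimately have "(\<lambda>n. emeasure M (B (b n))) \<longlonglongrightarrow> 0"
    by simp
  then have "eventually (\<lambda>n. emeasure M (B (b n)) < a) sequentially"
    using \<open>0 < a\<close> by (rule order_tendstoD)
  then show ?thesis
    using b unfolding eventually_sequentially by blast
qed

lemma tendsto_emeasure_decreasing_at_right:
  fixes B :: "real \<Rightarrow> 'a set"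
  assumes meas: "\<And>s. t < s \<Longrightarrow> B s \<in> sets M"
    and mono: "\<And>s s'. t < s \<Longrightarrow> s \<le> s' \<Longrightarrow> B s \<subseteq> B s'"
    and fin: "\<And>s. t < s \<Longrightarrow> emeasure M (B s) \<noteq> \<infinity>"
    and empty: "\<And>y. \<exists>s>t. y \<notin> B s"
  shows "((\<lambda>s. emeasure M (B s)) \<longlongrightarrow> 0) (at_right t)"
proof (rule order_tendstoI)
  fix a :: ennreal assume "0 < a"
  then obtain s0 where "t < s0" and s0: "emeasure M (B s0) < a"
    using ex_emeasure_less_at_right[OF meas mono fin empty] by blast
  have "emeasure M (B s) < a" if "t < s" "s < s0" for s
  proof -
    have "emeasure M (B s) \<le> emeasure M (B s0)"
      using that by (intro emeasure_mono mono meas) auto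
    then show ?thesis
      using s0 by (rule order_le_less_trans)
  qed
  then show "eventually (\<lambda>s. emeasure M (B s) < a) (at_right t)"
    unfolding eventually_at_right_field using \<open>t < s0\<close> by blast
qed simp

lemma tendsto_emeasure_cball_diff_at_right:
  fixes x :: "'a::metric_space"
  assumes borel: "sets M = sets borel" and finite: "\<And>r. emeasure M (cball x r) < \<infinity>"
  shows "((\<lambda>s. emeasure M (cball x s - cball x t)) \<longlongrightarrow> 0) (at_right t)"
proof (rule tendsto_emeasure_decreasing_at_right)
  show "cball x s - cball x t \<in> sets M" for s
    by (intro sets.Diff) (simp_all add: borel)
  have "emeasure M (cball x s - cball x t) \<le> emeasure M (cball x s)" for s
    by (rule emeasure_mono) (auto simp: borel)
  then have "emeasure M (cball x s - cball x t) < \<infinity>" for s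
    using finite by (rule order_le_less_trans)
  then show "emeasure M (cball x s - cball x t) \<noteq> \<infinity>" for s
    by (simp add: less_top)
  show "\<exists>s>t. y \<notin> cball x s - cball x t" for y
  proof (cases "dist x y \<le> t")
    case True
    then show ?thesis by (intro exI[of _ "t + 1"]) auto
  next
    case False
    then show ?thesis by (intro exI[of _ "(t + dist x y) / 2"]) auto
  qed
qed auto

lemma tendsto_emeasure_ball_diff_cball_at_left:
  fixes x :: "'a::metric_space"
  assumes borel: "sets M = sets borel" and finite: "\<And>r. emeasure M (cball x r) < \<infinity>"
  shows "((\<lambda>s. emeasure M (ball x r - cball x s)) \<longlongrightarrow> 0) (at_left r)"
  unfolding filterlim_at_left_to_right
proof (rule tendsto_emeasure_decreasing_at_right[where B = "\<lambda>s. ball x r - cball x (- s)"])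
  show "ball x r - cball x (- s) \<in> sets M" for s
    by (intro sets.Diff) (simp_all add: borel)
  have "emeasure M (ball x r - cball x (- s)) \<le> emeasure M (cball x r)" for s
    by (rule emeasure_mono) (auto simp: borel)
  then have "emeasure M (ball x r - cball x (- s)) < \<infinity>" for s
    using finite by (rule order_le_less_trans)
  then show "emeasure M (ball x r - cball x (- s)) \<noteq> \<infinity>" for s
    by (simp add: less_top)
  show "\<exists>s>- r. y \<notin> ball x r - cball x (- s)" for y
  proof (cases "dist x y < r")
    case True
    then show ?thesis by (intro exI[of _ "- dist x y"]) auto
  next
    case False
    then show ?thesis by (intro exI[of _ "1 - r"]) auto
  qed
qed auto

lemma tendsto_prokhorov_dist_restrict_cball_at_right:
  fixes x :: "'a::metric_space"
  assumes borel: "sets M = sets borel" and proper: "\<And>y::'a. \<And>r. compact (cball y r)"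
    and finite: "\<And>r. emeasure M (cball x r) < \<infinity>"
  shows "((\<lambda>s. prokhorov_dist (restrict_meas M (cball x s)) (restrict_meas M (cball x t))) \<longlongrightarrow> 0)
    (at_right t)"
proof (rule tendsto_prokhorov_dist_zero)
  fix e :: real assume "0 < e"
  have "eventually (\<lambda>s. emeasure M (cball x s - cball x t) < ennreal e) (at_right t)"
    using tendsto_emeasure_cball_diff_at_right[OF borel finite] \<open>0 < e\<close> by (intro order_tendstoD) auto
  moreover have "eventually (\<lambda>s. t < s) (at_right t)"
    by (rule eventually_at_right_less)
  ultimately show "eventually (\<lambda>s. prokhorov_close (restrict_meas M (cball x s)) (restrict_meas M (cball x t)) e)
    (at_right t)"
  proof eventually_elim
    case (elim s)
    then show ?case
      using \<open>0 < e\<close> closed_thick[OF proper]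
      by (intro prokhorov_close_restrict_meas[OF borel]) (auto simp: borel)
  qed
qed

lemma tendsto_prokhorov_dist_restrict_cball_at_left:
  fixes x :: "'a::metric_space"
  assumes borel: "sets M = sets borel" and proper: "\<And>y::'a. \<And>r. compact (cball y r)"
    and finite: "\<And>r. emeasure M (cball x r) < \<infinity>"
  shows "((\<lambda>s. prokhorov_dist (restrict_meas M (cball x s)) (restrict_meas M (ball x r))) \<longlongrightarrow> 0)
    (at_left r)"
proof (rule tendsto_prokhorov_dist_zero)
  fix e :: real assume "0 < e"
  have "eventually (\<lambda>s. emeasure M (ball x r - cball x s) < ennreal e) (at_left r)"
    using tendsto_emeasure_ball_diff_cball_at_left[OF borel finite] \<open>0 < e\<close> by (intro order_tendstoD) auto
  moreover have "eventually (\<lambda>s. s < r) (at_left r)"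
    by (simp add: eventually_at_filter)
  ultimately show "eventually (\<lambda>s. prokhorov_close (restrict_meas M (cball x s)) (restrict_meas M (ball x r)) e)
    (at_left r)"
  proof eventually_elim
    case (elim s)
    then have "prokhorov_close (restrict_meas M (ball x r)) (restrict_meas M (cball x s)) e"
      using \<open>0 < e\<close> closed_thick[OF proper]
      by (intro prokhorov_close_restrict_meas[OF borel]) (auto simp: borel)
    then show ?case
      by (simp add: prokhorov_close_commute)
  qed
qed

theorem lemma3p2:
  fixes x0 :: "'a::metric_space" and M :: "'a measure"
  assumes "boundedly_compact_pmm x0 M"
  shows "(\<forall>t\<ge>0. ((\<lambda>s. hausdorff_dist (cball x0 s) (cball x0 t)) \<longlongrightarrow> 0) (at_right t))
       \<and> (\<forall>r>0. ((\<lambda>s. hausdorff_dist (cball x0 s) (closure (ball x0 r))) \<longlongrightarrow> 0) (at_left r))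
       \<and> (\<forall>t\<ge>0. ((\<lambda>s. prokhorov_dist (restrict_meas M (cball x0 s)) (restrict_meas M (cball x0 t)))
              \<longlongrightarrow> 0) (at_right t))
       \<and> (\<forall>r>0. ((\<lambda>s. prokhorov_dist (restrict_meas M (cball x0 s)) (restrict_meas M (ball x0 r)))
              \<longlongrightarrow> 0) (at_left r))"
proof -
  have borel: "sets M = sets borel" and proper: "\<And>y::'a. \<And>r. compact (cball y r)"
    and finite: "\<And>r. emeasure M (cball x0 r) < \<infinity>"
    using assms by (simp_all add: boundedly_compact_pmm_def)
  show ?thesis
    using tendsto_hausdorff_dist_cball_at_right[OF proper] tendsto_hausdorff_dist_cball_at_left[OF proper]
      tendsto_prokhorov_dist_restrict_cball_at_right[OF borel proper finite]
      tendsto_prokhorov_dist_restrict_cball_at_left[OF borel proper finite]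
    by blast
qed

end
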